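(* Let $N>1$ be an integer and $v=2^N$. For $1\le i\le N$ let $A_i\subseteq\mathbb{Z}_{2^N}$ be the set of residues $t\in\{0,\dots,2^N-1\}$ with $t \bmod 2^i\in\{0,1,\dots,2^{i-1}-1\}$ (i.e. the binary sequence of $A_i$ consists of a block of $2^{i-1}$ ones followed by $2^{i-1}$ zeros, repeated $2^{N-i}$ times). Then $\{A_1,\dots,A_N\}$ is a $(2^N,N,2^{N-1},2^{N-2})$-PSEDF in $\mathbb{Z}_{2^N}$. In particular, a $(2^N, N, 2^{N-1}, 2^{N-2})$-PSEDF exists in $\mathbb{Z}_{2^N}$.
   Context: Groups are written additively. For subsets $A,B$ of a group $G$, $\Delta(A,B)$ denotes the multiset $\{a-b: a\in A, b\in B\}$. For a group $G$ of order $v$ and $m>1$, a family of $k$-subsets $\{A_1,\dots,A_m\}$ of $G$ is a $(v,m,k,\lambda)$-PSEDF (pairwise strong external difference family) if for every pair $i\neq j$ the multiset $\Delta(A_i,A_j)$ contains every element of $G$ exactly $\lambda$ times (the sets need not be disjoint). *)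

theory Defs
  imports Main
begin

text \<open>The cyclic group Z_v is modelled by the residues {0..<v} (as integers) with
  addition/subtraction modulo v.\<close>

definition cyc :: "nat \<Rightarrow> int set" where
  "cyc v = {0..<int v}"

text \<open>Multiplicity of g in the multiset Delta(A,B) = {a - b : a in A, b in B} in Z_v.\<close>
definition delta_count :: "nat \<Rightarrow> int set \<Rightarrow> int set \<Rightarrow> int \<Rightarrow> nat" where
  "delta_count v A B g = card {(a, b). a \<in> A \<and> b \<in> B \<and> (a - b) mod int v = g}"

definition is_PSEDF :: "nat \<Rightarrow> nat \<Rightarrow> nat \<Rightarrow> nat \<Rightarrow> (nat \<Rightarrow> int set) \<Rightarrow> bool" where
  "is_PSEDF v m k lam A \<longleftrightarrow>
     m > 1 \<and>
     (\<forall>i\<in>{1..m}. A i \<subseteq> cyc v \<and> card (A i) = k) \<and>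
     (\<forall>i\<in>{1..m}. \<forall>j\<in>{1..m}. i \<noteq> j \<longrightarrow>
        (\<forall>g\<in>cyc v. delta_count v (A i) (A j) g = lam))"

definition blockset :: "nat \<Rightarrow> nat \<Rightarrow> int set" where
  "blockset N i = {t \<in> cyc (2 ^ N). t mod 2 ^ i \<in> {0..<2 ^ (i - 1)}}"

end

theory Submission
  imports Defs
begin

text \<open>For \<open>k \<ge> 1\<close>, \<open>t\<close> lies in the lower half of its block of length \<open>2^k\<close> iff bit \<open>k - 1\<close>
  of \<open>t\<close> is zero. Adding \<open>2^(k-1)\<close> toggles this bit and leaves all lower bits alone, so
  translating by \<open>2^(k-1)\<close> is a fixed-point-free pairing of \<open>\<int>/2^N\<close> that swaps membership
  in \<open>A\<^sub>k\<close> and preserves membership in every \<open>A\<^sub>l\<close> with \<open>l < k\<close>, and in every translate of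
  such a set. Hence \<open>A\<^sub>k\<close> has \<open>2^(N-1)\<close> elements, and for \<open>l < k\<close> the pairing halves
  \<open>A\<^sub>l \<inter> (A\<^sub>k - g)\<close> inside \<open>A\<^sub>l\<close>, giving \<open>2^(N-2)\<close> elements; this number is the multiplicity
  of \<open>g\<close> in \<open>\<Delta>(A\<^sub>k, A\<^sub>l)\<close>, and symmetrically for \<open>\<Delta>(A\<^sub>l, A\<^sub>k)\<close>.\<close>

definition lower_half :: "nat \<Rightarrow> int \<Rightarrow> bool" where
  "lower_half k t \<longleftrightarrow> t mod 2 ^ k < 2 ^ (k - 1)"

lemma blockset_eq: "blockset N i = {t \<in> cyc (2 ^ N). lower_half i t}"
  unfolding blockset_def lower_half_def by auto

lemma blockset_subset_cyc: "blockset N i \<subseteq> cyc (2 ^ N)"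
  by (auto simp: blockset_def)

lemma lower_half_add_dvd:
  assumes "2 ^ l dvd c"
  shows "lower_half l (t + c) \<longleftrightarrow> lower_half l t"
proof -
  have "(t + c) mod 2 ^ l = t mod 2 ^ l"
    using assms by (metis dvd_imp_mod_0 mod_add_right_eq add.right_neutral)
  then show ?thesis unfolding lower_half_def by simp
qed

lemma lower_half_add_mod:
  assumes "k \<le> N"
  shows "lower_half k (s + x mod 2 ^ N) \<longleftrightarrow> lower_half k (s + x)"
proof -
  have "(2::int) ^ k dvd 2 ^ N" using assms by (rule le_imp_power_dvd)
  then have "(s + x mod 2 ^ N) mod 2 ^ k = (s + x) mod 2 ^ k"
    by (metis mod_add_right_eq mod_mod_cancel)
  then show ?thesis unfolding lower_half_def by simp
qed

lemma lower_half_add_half: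
  assumes "1 \<le> k"
  shows "lower_half k (t + 2 ^ (k - 1)) \<longleftrightarrow> \<not> lower_half k t"
proof -
  define m :: int where "m = 2 ^ (k - 1)"
  have m: "m > 0" "2 ^ k = 2 * m"
    using assms by (simp_all add: m_def flip: power_Suc)
  define r where "r = t mod (2 * m)"
  have r: "0 \<le> r" "r < 2 * m" using m by (simp_all add: r_def)
  have shift: "(t + m) mod (2 * m) = (r + m) mod (2 * m)"
    unfolding r_def by (rule mod_add_left_eq[symmetric])
  have "(r + m) mod (2 * m) = (if r < m then r + m else r - m)"
  proof (cases "r < m")
    case True
    then show ?thesis using r by (simp add: mod_pos_pos_trivial)
  next
    case False
    have "(r + m) mod (2 * m) = (r - m + 2 * m) mod (2 * m)" by (simp add: algebra_simps)
    also have "\<dots> = r - m" using r False by (simp only: mod_add_self2 mod_pos_pos_trivial)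
    finally show ?thesis using False by simp
  qed
  then show ?thesis
    unfolding lower_half_def m(2) shift m_def[symmetric] r_def[symmetric] using r by auto
qed

lemma twice_card_filter_eq_card:
  assumes "finite Y" "inj_on f Y" "f ` Y \<subseteq> Y" "\<And>b. b \<in> Y \<Longrightarrow> P (f b) \<longleftrightarrow> \<not> P b"
  shows "2 * card {b \<in> Y. P b} = card Y"
proof -
  let ?A = "{b \<in> Y. P b}" and ?B = "{b \<in> Y. \<not> P b}"
  have "card ?A \<le> card ?B" "card ?B \<le> card ?A"
    by (rule card_inj_on_le[of f]; use assms in \<open>auto intro: inj_on_subset\<close>)+
  moreover have "card Y = card ?A + card ?B"
    using assms(1) by (subst card_Un_disjoint[symmetric]) (auto intro: arg_cong[of _ _ card])
  ultimately show ?thesis by linarith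
qed

lemma inj_on_translate_cyc: "inj_on (\<lambda>b. (b + c) mod int v) (cyc v)"
proof (rule inj_onI)
  fix x y assume "x \<in> cyc v" "y \<in> cyc v" "(x + c) mod int v = (y + c) mod int v"
  then show "x = y"
    unfolding cyc_def by (metis add_diff_cancel_right' atLeastLessThan_iff mod_diff_left_eq
        mod_pos_pos_trivial)
qed

lemma translate_cyc_subset: "(\<lambda>b. (b + c) mod 2 ^ N) ` cyc (2 ^ N) \<subseteq> cyc (2 ^ N)"
  by (auto simp: cyc_def)

lemma lower_half_translate:
  assumes "k \<le> N"
  shows "lower_half k (s + (b + c) mod 2 ^ N) \<longleftrightarrow> lower_half k (s + b + c)"
  using lower_half_add_mod[OF assms] by (simp add: add.assoc)

lemma card_lower_half_translate:
  assumes "1 \<le> k" "k \<le> N"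
  shows "2 * card {b \<in> cyc (2 ^ N). lower_half k (s + b)} = 2 ^ N"
proof -
  have "2 * card {b \<in> cyc (2 ^ N). lower_half k (s + b)} = card (cyc (2 ^ N))"
  proof (rule twice_card_filter_eq_card)
    show "inj_on (\<lambda>b. (b + 2 ^ (k - 1)) mod 2 ^ N) (cyc (2 ^ N))"
      using inj_on_translate_cyc[of "2 ^ (k - 1)" "2 ^ N"] by simp
    show "lower_half k (s + (b + 2 ^ (k - 1)) mod 2 ^ N) \<longleftrightarrow> \<not> lower_half k (s + b)" for b
      using lower_half_translate[OF assms(2)] lower_half_add_half[OF assms(1)] by simp
  qed (auto simp: cyc_def)
  then show ?thesis by (simp add: cyc_def)
qed

lemma card_lower_half_translate_pair:
  assumes "1 \<le> l" "l < k" "k \<le> N"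
  shows "4 * card {b \<in> cyc (2 ^ N). lower_half l (s + b) \<and> lower_half k (t + b)} = 2 ^ N"
proof -
  let ?Y = "{b \<in> cyc (2 ^ N). lower_half l (s + b)}"
  let ?\<tau> = "\<lambda>b. (b + 2 ^ (k - 1)) mod 2 ^ N"
  have preserves: "lower_half l (s + ?\<tau> b) \<longleftrightarrow> lower_half l (s + b)" for b
  proof -
    have "(2::int) ^ l dvd 2 ^ (k - 1)" using assms(2) by (intro le_imp_power_dvd) simp
    then show ?thesis
      using lower_half_translate[of l N s b] lower_half_add_dvd[of l _ "s + b"] assms
      by (simp add: add.assoc)
  qed
  have "2 * card {b \<in> ?Y. lower_half k (t + b)} = card ?Y"
  proof (rule twice_card_filter_eq_card)
    show "inj_on ?\<tau> ?Y"
      using inj_on_translate_cyc[of "2 ^ (k - 1)" "2 ^ N"] by (simp add: inj_on_subset)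
    show "?\<tau> ` ?Y \<subseteq> ?Y" using translate_cyc_subset preserves by auto
    show "lower_half k (t + ?\<tau> b) \<longleftrightarrow> \<not> lower_half k (t + b)" for b
      using lower_half_translate[OF assms(3)] lower_half_add_half assms by simp
  qed (rule finite_subset[of _ "cyc (2 ^ N)"], auto simp: cyc_def)
  moreover have "2 * card ?Y = 2 ^ N"
    using card_lower_half_translate assms by simp
  moreover have "{b \<in> ?Y. lower_half k (t + b)}
      = {b \<in> cyc (2 ^ N). lower_half l (s + b) \<and> lower_half k (t + b)}" by auto
  ultimately show ?thesis by simp
qed

lemma delta_count_eq_card_translate:
  assumes "A \<subseteq> cyc v" "g \<in> cyc v"
  shows "delta_count v A B g = card {b \<in> B. (g + b) mod int v \<in> A}"
proof -
  let ?S = "{b \<in> B. (g + b) mod int v \<in> A}"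
  have "{(a, b). a \<in> A \<and> b \<in> B \<and> (a - b) mod int v = g} = (\<lambda>b. ((g + b) mod int v, b)) ` ?S"
  proof (intro set_eqI iffI)
    fix p assume "p \<in> {(a, b). a \<in> A \<and> b \<in> B \<and> (a - b) mod int v = g}"
    then obtain a b where p: "p = (a, b)" "a \<in> A" "b \<in> B" "(a - b) mod int v = g" by blast
    have "a = a mod int v" using p(2) assms(1) by (auto simp: cyc_def)
    also have "\<dots> = (g + b) mod int v" using p(4) by (metis diff_add_cancel mod_add_left_eq)
    finally show "p \<in> (\<lambda>b. ((g + b) mod int v, b)) ` ?S" using p by auto
  next
    fix p assume "p \<in> (\<lambda>b. ((g + b) mod int v, b)) ` ?S"
    then obtain b where b: "b \<in> ?S" and p: "p = ((g + b) mod int v, b)" by blast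
    have "((g + b) mod int v - b) mod int v = g mod int v" by (simp add: mod_simps)
    also have "\<dots> = g" using assms(2) by (auto simp: cyc_def)
    finally show "p \<in> {(a, b). a \<in> A \<and> b \<in> B \<and> (a - b) mod int v = g}" using b p by auto
  qed
  moreover have "inj_on (\<lambda>b. ((g + b) mod int v, b)) ?S" by (auto intro: inj_onI)
  ultimately show ?thesis unfolding delta_count_def by (simp add: card_image)
qed

lemma card_blockset_translate_pair:
  assumes "i \<in> {1..N}" "j \<in> {1..N}" "i \<noteq> j"
  shows "4 * card {b \<in> blockset N j. (g + b) mod 2 ^ N \<in> blockset N i} = 2 ^ N"
proof -
  have "{b \<in> blockset N j. (g + b) mod 2 ^ N \<in> blockset N i}
      = {b \<in> cyc (2 ^ N). lower_half j (0 + b) \<and> lower_half i (g + b)}"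
    using lower_half_add_mod[of i N 0 "g + b" for b] assms(1)
    by (auto simp: blockset_eq cyc_def)
  moreover consider "j < i" | "i < j" using assms(3) by linarith
  then have "4 * card {b \<in> cyc (2 ^ N). lower_half j (0 + b) \<and> lower_half i (g + b)} = 2 ^ N"
    using card_lower_half_translate_pair[of j i N 0 g] card_lower_half_translate_pair[of i j N g 0]
      assms by cases (simp_all add: conj_commute)
  ultimately show ?thesis by simp
qed

theorem theorem3p5:
  fixes N :: nat
  assumes "N > 1"
  shows "is_PSEDF (2 ^ N) N (2 ^ (N - 1)) (2 ^ (N - 2)) (blockset N)
         \<and> (\<exists>A. is_PSEDF (2 ^ N) N (2 ^ (N - 1)) (2 ^ (N - 2)) A)"
proof -
  obtain n where "N = Suc (Suc n)" using assms by (metis Suc_diff_Suc diff_Suc_1 less_imp_Suc_add)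
  then have pow: "(2::nat) ^ N = 2 * 2 ^ (N - 1)" "(2::nat) ^ N = 4 * 2 ^ (N - 2)" by simp_all
  have "is_PSEDF (2 ^ N) N (2 ^ (N - 1)) (2 ^ (N - 2)) (blockset N)"
    unfolding is_PSEDF_def
  proof (intro conjI ballI impI)
    fix i assume i: "i \<in> {1..N}"
    show "blockset N i \<subseteq> cyc (2 ^ N)" by (rule blockset_subset_cyc)
    show "card (blockset N i) = 2 ^ (N - 1)"
      using card_lower_half_translate[of i N 0] i pow(1) by (simp add: blockset_eq)
  next
    fix i j g assume "i \<in> {1..N}" "j \<in> {1..N}" "i \<noteq> j" "g \<in> cyc (2 ^ N)"
    then have "4 * delta_count (2 ^ N) (blockset N i) (blockset N j) g = 2 ^ N"
      using delta_count_eq_card_translate[OF blockset_subset_cyc] card_blockset_translate_pair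
      by simp
    then show "delta_count (2 ^ N) (blockset N i) (blockset N j) g = 2 ^ (N - 2)"
      using pow(2) by simp
  qed (rule assms)
  then show ?thesis by blast
qed

end
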